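(* Let $k$ be an unramified non-archimedean local field of residue characteristic $2$ (so $e=1$ and we take $\varpi=2$). Let $B(x)=x_1^2-\Delta x_2^2$ on $k^2$, where $\Delta=1+2v$ is a unit with quadratic defect $2\mathfrak o$ and $v$ is a unit. Let $z=q^{-\beta}$, $w=zq^{-1}$, and $t\in\mathfrak o\setminus\{0\}$ with $|t|=q^{-T}$. Then \[ X^B(\beta;t^2)=|2|\,\frac{1+w^{2T+1}}{1-w}. \]
   Context: $k$ has ring of integers $\mathfrak o$, residue field of cardinality $q$, absolute value normalized by $|2|=q^{-1}$. On $\mathfrak o^n$ use the additive Haar measure of total mass $1$. For a quadratic form $B$ on $k^n$, $\rho\in\mathfrak o$ and integer $\ell\ge0$: $X_\ell^B(\rho)=\operatorname{meas}\{x\in\mathfrak o^n: B(x)-\rho\in 2^{\ell+1}\mathfrak o\}$ and $X^B(\beta;\rho)=\sum_{\ell\ge0}z^\ell X_\ell^B(\rho)$ with $z=q^{-\beta}$. The quadratic defect of $\rho\in k$ is the intersection of all ideals $b\mathfrak o$ over those $b\in k$ for which $\rho-b$ is a square in $k$. *)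

theory Defs
  imports "HOL-Analysis.Analysis"
begin

definition nonarch_abs :: "('a::field \<Rightarrow> real) \<Rightarrow> bool" where
  "nonarch_abs absv \<longleftrightarrow>
     (\<forall>x. 0 \<le> absv x) \<and> (\<forall>x. absv x = 0 \<longleftrightarrow> x = 0) \<and>
     (\<forall>x y. absv (x * y) = absv x * absv y) \<and>
     (\<forall>x y. absv (x + y) \<le> max (absv x) (absv y))"

definition int_ring :: "('a::field \<Rightarrow> real) \<Rightarrow> 'a set" where
  "int_ring absv = {x. absv x \<le> 1}"

definition ideal_gen :: "('a::field \<Rightarrow> real) \<Rightarrow> 'a \<Rightarrow> 'a set" where
  "ideal_gen absv b = {b * y | y. y \<in> int_ring absv}"

definition residue_field :: "('a::field \<Rightarrow> real) \<Rightarrow> 'a set set" where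
  "residue_field absv =
     (\<lambda>x. {y \<in> int_ring absv. absv (x - y) < 1}) ` int_ring absv"

definition abs_complete :: "('a::field \<Rightarrow> real) \<Rightarrow> bool" where
  "abs_complete absv \<longleftrightarrow>
     (\<forall>f :: nat \<Rightarrow> 'a.
        (\<forall>e>0. \<exists>N. \<forall>m\<ge>N. \<forall>n\<ge>N. absv (f m - f n) < e) \<longrightarrow>
        (\<exists>L. \<forall>e>0. \<exists>N. \<forall>n\<ge>N. absv (f n - L) < e))"

text \<open>k is a non-archimedean local field (complete, discretely valued, finite residue
  field of cardinality q), absolute value normalized so that the values of nonzero
  elements are the integral powers of q, and it is unramified of residue characteristic 2
  with uniformizer 2: |2| = 1/q.\<close>
definition unram_dyadic_local_field :: "('a::field \<Rightarrow> real) \<Rightarrow> nat \<Rightarrow> bool" where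
  "unram_dyadic_local_field absv q \<longleftrightarrow>
     nonarch_abs absv \<and> abs_complete absv \<and>
     finite (residue_field absv) \<and> card (residue_field absv) = q \<and>
     (\<forall>x. x \<noteq> 0 \<longrightarrow> (\<exists>n::int. absv x = real q powi n)) \<and>
     absv 2 = 1 / real q"

definition quad_defect :: "('a::field \<Rightarrow> real) \<Rightarrow> 'a \<Rightarrow> 'a set" where
  "quad_defect absv \<rho> = \<Inter> {ideal_gen absv b | b. \<exists>s. \<rho> - b = s ^ 2}"

definition balls2 :: "('a::field \<Rightarrow> real) \<Rightarrow> ('a \<times> 'a) set set" where
  "balls2 absv = { {y \<in> int_ring absv \<times> int_ring absv.
                     absv (fst y - fst c) \<le> r \<and> absv (snd y - snd c) \<le> r}
                 | c r. c \<in> int_ring absv \<times> int_ring absv \<and> r > 0}"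

text \<open>mu is the additive Haar measure of total mass 1 on o^2: a translation invariant
  probability measure on the Borel sigma-algebra of o^2 (generated by the balls).\<close>
definition haar_prob_o2 :: "('a::field \<Rightarrow> real) \<Rightarrow> ('a \<times> 'a) measure \<Rightarrow> bool" where
  "haar_prob_o2 absv \<mu> \<longleftrightarrow>
     space \<mu> = int_ring absv \<times> int_ring absv \<and>
     sets \<mu> = sigma_sets (int_ring absv \<times> int_ring absv) (balls2 absv) \<and>
     emeasure \<mu> (int_ring absv \<times> int_ring absv) = 1 \<and>
     (\<forall>a \<in> int_ring absv \<times> int_ring absv. \<forall>A \<in> sets \<mu>.
        emeasure \<mu> ((\<lambda>x. (fst x + fst a, snd x + snd a)) ` A) = emeasure \<mu> A)"

definition X_l :: "('a::field \<Rightarrow> real) \<Rightarrow> ('a \<times> 'a) measure \<Rightarrow> ('a \<times> 'a \<Rightarrow> 'a)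
                   \<Rightarrow> 'a \<Rightarrow> nat \<Rightarrow> real" where
  "X_l absv \<mu> B \<rho> l =
     measure \<mu> {x \<in> int_ring absv \<times> int_ring absv.
                 B x - \<rho> \<in> ideal_gen absv (2 ^ (l + 1))}"

end

theory Submission
  imports Defs
begin

text \<open>Write \<open>t = 2\<^sup>T u\<close> with a unit \<open>u\<close>. The solutions of \<open>B(x) \<equiv> t\<^sup>2 (mod 2\<^sup>n)\<close> in
  \<open>\<o>\<^sup>2\<close> form a union of cosets of \<open>(2\<^sup>m\<o>)\<^sup>2\<close>, so their measure can be computed by
  double counting: if every point of \<open>A\<close> has exactly \<open>k\<close> of its \<open>q\<^sup>2\<close> translates
  \<open>x + 2\<^sup>m(r, r')\<close> (\<open>r, r'\<close> residues) in \<open>C \<subseteq> A\<close>, then \<open>\<mu>(C) = k \<mu>(A) / q\<^sup>2\<close>.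
  Since \<open>\<Delta>\<close> is not a square modulo \<open>4\<close>, \<open>B(x) \<equiv> 0 (mod 4)\<close> forces \<open>x \<in> 2\<o>\<^sup>2\<close>, so the
  solution set for \<open>2\<sigma>\<close> modulo \<open>2\<^sup>n\<^sup>+\<^sup>2\<close> is twice the one for \<open>\<sigma>\<close> modulo \<open>2\<^sup>n\<close>; this
  reduces everything to \<open>n \<le> 1\<close> or to the unit \<open>u\<close>. Modulo \<open>2\<close> the congruence is the
  linear condition \<open>x\<^sub>1 - x\<^sub>2 \<equiv> \<sigma>\<close>, modulo \<open>4\<close> it has two branches, and each further
  step is a Hensel lift with exactly one good choice out of \<open>q\<close>. Hence
  \<open>X\<^sub>\<ell> = q\<^sup>-\<^sup>\<ell>\<^sup>-\<^sup>1\<close> for \<open>\<ell> \<le> 2T\<close> and twice that beyond, and the series is geometric.\<close>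

section \<open>Non-archimedean absolute values\<close>

locale nonarch_abs_field =
  fixes absv :: "'a::field \<Rightarrow> real"
  assumes nonarch: "nonarch_abs absv"
begin

lemma absv_nonneg: "0 \<le> absv x"
  using nonarch unfolding nonarch_abs_def by auto

lemma absv_eq_0_iff [simp]: "absv x = 0 \<longleftrightarrow> x = 0"
  using nonarch unfolding nonarch_abs_def by auto

lemma absv_0 [simp]: "absv 0 = 0"
  by simp

lemma absv_mult: "absv (x * y) = absv x * absv y"
  using nonarch unfolding nonarch_abs_def by auto

lemma absv_add_le_max: "absv (x + y) \<le> max (absv x) (absv y)"
  using nonarch unfolding nonarch_abs_def by auto

lemma absv_1 [simp]: "absv 1 = 1"
proof -
  have "absv 1 * absv 1 = absv 1 * 1"
    using absv_mult[of 1 1] by simp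
  then show ?thesis
    by (simp only: mult_left_cancel absv_eq_0_iff one_neq_zero not_False_eq_True)
qed

lemma absv_minus [simp]: "absv (- x) = absv x"
proof -
  have "absv (-1) ^ 2 = 1"
    using absv_mult[of "-1" "-1"] by (simp add: power2_eq_square)
  then have "absv (-1) = 1"
    using absv_nonneg[of "-1"] power2_eq_1_iff by force
  then show ?thesis
    using absv_mult[of "-1" x] by simp
qed

lemma absv_minus_commute: "absv (x - y) = absv (y - x)"
  by (metis absv_minus minus_diff_eq)

lemma absv_power: "absv (x ^ n) = absv x ^ n"
  by (induction n) (auto simp: absv_mult)

lemma absv_divide: "absv (x / y) = absv x / absv y"
  by (cases "y = 0") (auto simp: absv_mult[symmetric] nonzero_eq_divide_eq)

end

section \<open>Valuations in an unramified dyadic field\<close>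

locale dyadic_field =
  fixes absv :: "'a::field \<Rightarrow> real" and q :: nat
  assumes local_field: "unram_dyadic_local_field absv q"
begin

sublocale nonarch_abs_field absv
  using local_field by unfold_locales (simp add: unram_dyadic_local_field_def)

lemma absv_2: "absv 2 = 1 / real q"
  using local_field unfolding unram_dyadic_local_field_def by auto

lemma absv_discrete: "x \<noteq> 0 \<Longrightarrow> \<exists>n::int. absv x = real q powi n"
  using local_field unfolding unram_dyadic_local_field_def by auto

definition residue_class :: "'a \<Rightarrow> 'a set" where
  "residue_class x = {y \<in> int_ring absv. absv (x - y) < 1}"

lemma residue_field_eq: "residue_field absv = residue_class ` int_ring absv"
  unfolding residue_field_def residue_class_def ..

lemma finite_residue_field: "finite (residue_class ` int_ring absv)"
  and card_residue_field: "card (residue_class ` int_ring absv) = q"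
  using local_field unfolding unram_dyadic_local_field_def residue_field_eq by auto

lemma q_ge_2: "2 \<le> q"
proof -
  have int01: "0 \<in> int_ring absv" "1 \<in> int_ring absv"
    unfolding int_ring_def by auto
  have "1 \<in> residue_class 1" "1 \<notin> residue_class 0"
    unfolding residue_class_def int_ring_def by auto
  then have "card {residue_class 0, residue_class 1} = 2"
    by (metis card_2_iff)
  moreover have "{residue_class 0, residue_class 1} \<subseteq> residue_class ` int_ring absv"
    using int01 by auto
  ultimately show ?thesis
    using card_mono[OF finite_residue_field] card_residue_field by metis
qed

lemma two_nonzero [simp]: "(2::'a) \<noteq> 0"
proof
  assume "(2::'a) = 0"
  then have "absv (2::'a) = 0"
    by simp
  then show False
    using absv_2 q_ge_2 by simp
qed

lemma absv_2_power: "absv ((2::'a) ^ k) = (1 / real q) ^ k"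
  by (simp add: absv_power absv_2)

text \<open>\<open>val_ge m x\<close> means \<open>x \<in> 2\<^sup>m \<o>\<close>.\<close>
definition val_ge :: "nat \<Rightarrow> 'a \<Rightarrow> bool" where
  "val_ge m x \<longleftrightarrow> absv x \<le> (1 / real q) ^ m"

lemma val_ge_Suc_if_less:
  assumes "absv x < (1 / real q) ^ m"
  shows "val_ge (Suc m) x"
proof (cases "x = 0")
  case True
  then show ?thesis unfolding val_ge_def by simp
next
  case False
  then obtain n where n: "absv x = real q powi n"
    using absv_discrete by blast
  have q: "1 < real q"
    using q_ge_2 by simp
  have inv_pow: "(1 / real q) ^ k = real q powi (- int k)" for k
    by (simp add: power_int_minus power_int_of_nat divide_inverse power_inverse)
  have "n < - int m"
  proof (rule ccontr)
    assume "\<not> n < - int m"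
    then have "real q powi (- int m) \<le> real q powi n"
      using q by (intro power_int_increasing) auto
    then show False
      using assms n inv_pow by simp
  qed
  then have "real q powi n \<le> real q powi (- int (Suc m))"
    using q by (intro power_int_increasing) auto
  then show ?thesis
    unfolding val_ge_def n inv_pow .
qed

lemma val_ge_0_iff: "val_ge 0 x \<longleftrightarrow> x \<in> int_ring absv"
  unfolding val_ge_def int_ring_def by simp

lemma val_ge_zero [simp]: "val_ge m 0"
  unfolding val_ge_def by simp

lemma val_ge_add: "val_ge m x \<Longrightarrow> val_ge m y \<Longrightarrow> val_ge m (x + y)"
  unfolding val_ge_def using absv_add_le_max[of x y] by simp

lemma val_ge_minus_iff [simp]: "val_ge m (- x) \<longleftrightarrow> val_ge m x"
  unfolding val_ge_def by simp

lemma val_ge_diff: "val_ge m x \<Longrightarrow> val_ge m y \<Longrightarrow> val_ge m (x - y)"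
  using val_ge_add[of m x "- y"] by simp

lemma val_ge_diff_commute: "val_ge m (x - y) \<longleftrightarrow> val_ge m (y - x)"
  unfolding val_ge_def using absv_minus_commute by simp

lemma val_ge_mono:
  assumes "m \<le> n" "val_ge n x"
  shows "val_ge m x"
proof -
  have "(1 / real q) ^ n \<le> (1 / real q) ^ m"
    using q_ge_2 assms(1) by (intro power_decreasing) auto
  then show ?thesis
    using assms(2) unfolding val_ge_def by linarith
qed

lemma val_ge_mult: "val_ge m x \<Longrightarrow> val_ge n y \<Longrightarrow> val_ge (m + n) (x * y)"
  unfolding val_ge_def absv_mult power_add by (intro mult_mono) (auto simp: absv_nonneg)

lemma val_ge_0_mult: "val_ge 0 x \<Longrightarrow> val_ge m y \<Longrightarrow> val_ge m (x * y)"
  using val_ge_mult[of 0 x m y] by simp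

lemma val_ge_mult_0: "val_ge m x \<Longrightarrow> val_ge 0 y \<Longrightarrow> val_ge m (x * y)"
  using val_ge_mult[of m x 0 y] by simp

lemma val_ge_0_power: "val_ge 0 x \<Longrightarrow> val_ge 0 (x ^ n)"
  by (induction n) (auto simp: val_ge_0_mult, simp add: val_ge_def)

lemma val_ge_pow2_mult_iff: "val_ge (k + m) (2 ^ k * y) \<longleftrightarrow> val_ge m y"
  unfolding val_ge_def absv_mult absv_2_power power_add using q_ge_2 by simp

lemma val_ge_2_mult_iff: "val_ge (Suc m) (2 * y) \<longleftrightarrow> val_ge m y"
  using val_ge_pow2_mult_iff[of 1 m y] by simp

lemma val_ge_pow2_mult: "val_ge 0 y \<Longrightarrow> val_ge k (2 ^ k * y)"
  using val_ge_pow2_mult_iff[of k 0 y] by simp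

lemma val_ge_1_2_mult: "val_ge 0 y \<Longrightarrow> val_ge 1 (2 * y)"
  using val_ge_pow2_mult[of y 1] by simp

lemma val_ge_2_2_mult_iff: "val_ge 2 (2 * y) \<longleftrightarrow> val_ge 1 y"
  using val_ge_pow2_mult_iff[of 1 1 y] by (simp add: numeral_2_eq_2)

lemma val_ge_4_mult_iff: "val_ge (m + 2) (4 * y) \<longleftrightarrow> val_ge m y"
  using val_ge_pow2_mult_iff[of 2 m y] by (simp add: add.commute)

lemma val_ge_2_4_mult: "val_ge 0 y \<Longrightarrow> val_ge 2 (4 * y)"
  using val_ge_4_mult_iff[of 0 y] by (simp add: numeral_2_eq_2)

lemma val_ge_0_pow2: "val_ge 0 ((2::'a) ^ k)"
  unfolding val_ge_def absv_2_power using q_ge_2 by (simp add: power_le_one)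

lemma val_ge_0_2: "val_ge 0 (2::'a)"
  using val_ge_0_pow2[of 1] by simp

lemma val_ge_imp_pow2_mult: "val_ge m x \<Longrightarrow> \<exists>y. val_ge 0 y \<and> x = 2 ^ m * y"
  using val_ge_pow2_mult_iff[of m 0 "x / 2 ^ m"] by (intro exI[of _ "x / 2 ^ m"]) simp

lemma val_ge_1_imp_2_mult: "val_ge 1 x \<Longrightarrow> \<exists>y. val_ge 0 y \<and> x = 2 * y"
  using val_ge_imp_pow2_mult[of 1 x] by simp

lemma val_ge_close_to_pow2_mult:
  assumes "val_ge (m + j) (a - 2 ^ j * b)" "val_ge 0 b"
  shows "\<exists>w. val_ge 0 w \<and> a = 2 ^ j * w \<and> val_ge m (w - b)"
proof -
  have "val_ge j (a - 2 ^ j * b)"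
    using val_ge_mono[OF _ assms(1)] by simp
  then have "val_ge j (a - 2 ^ j * b + 2 ^ j * b)"
    using val_ge_add val_ge_pow2_mult[OF assms(2)] by blast
  then obtain w where w: "val_ge 0 w" "a = 2 ^ j * w"
    using val_ge_imp_pow2_mult by auto
  have "val_ge (j + m) (2 ^ j * (w - b))"
    using assms(1) unfolding w(2) by (simp add: algebra_simps add.commute)
  then show ?thesis
    using w val_ge_pow2_mult_iff by blast
qed

lemma val_ge_1_iff: "val_ge 1 x \<longleftrightarrow> absv x < 1"
proof -
  have "1 / real q < 1"
    using q_ge_2 by simp
  then show ?thesis
    using val_ge_Suc_if_less[of x 0] unfolding val_ge_def by auto
qed

lemma unit_iff: "absv x = 1 \<longleftrightarrow> val_ge 0 x \<and> \<not> val_ge 1 x"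
  unfolding val_ge_1_iff by (auto simp: val_ge_def)

lemma val_ge_unit_mult_iff: "absv u = 1 \<Longrightarrow> val_ge m (u * x) \<longleftrightarrow> val_ge m x"
  unfolding val_ge_def by (simp add: absv_mult)

lemma val_ge_1_mult:
  assumes "val_ge 0 x" "val_ge 0 y" "val_ge 1 (x * y)"
  shows "val_ge 1 x \<or> val_ge 1 y"
proof (cases "val_ge 1 x")
  case False
  then have "absv x = 1"
    using assms(1) unit_iff by blast
  then show ?thesis
    using assms(3) val_ge_unit_mult_iff by blast
qed simp

lemma val_ge_1_square_diff:
  assumes "val_ge 0 a" "val_ge 0 b" "val_ge 1 (a\<^sup>2 - b\<^sup>2)"
  shows "val_ge 1 (a - b)"
proof -
  have "(a - b) * (a - b) = (a\<^sup>2 - b\<^sup>2) - 2 * (b * (a - b))"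
    by (simp add: power2_eq_square algebra_simps)
  moreover have "val_ge 1 (2 * (b * (a - b)))"
    using val_ge_1_2_mult val_ge_0_mult[OF assms(2) val_ge_diff[OF assms(1,2)]] by blast
  ultimately have "val_ge 1 ((a - b) * (a - b))"
    using val_ge_diff[OF assms(3)] by metis
  then show ?thesis
    using val_ge_1_mult val_ge_diff[OF assms(1,2)] by blast
qed

lemma ideal_gen_pow2_iff: "z \<in> ideal_gen absv (2 ^ m) \<longleftrightarrow> val_ge m z"
  unfolding ideal_gen_def val_ge_0_iff[symmetric]
  using val_ge_pow2_mult val_ge_imp_pow2_mult by blast

lemma residue_class_mem:
  "y \<in> residue_class x \<longleftrightarrow> y \<in> int_ring absv \<and> val_ge 1 (x - y)"
  unfolding residue_class_def val_ge_1_iff by simp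

lemma residue_class_eq_iff:
  assumes "x \<in> int_ring absv" "y \<in> int_ring absv"
  shows "residue_class x = residue_class y \<longleftrightarrow> val_ge 1 (x - y)"
proof
  assume eq: "residue_class x = residue_class y"
  have "y \<in> residue_class y"
    using assms(2) by (simp add: residue_class_mem)
  then show "val_ge 1 (x - y)"
    unfolding eq[symmetric] residue_class_mem by simp
next
  assume xy: "val_ge 1 (x - y)"
  have "val_ge 1 (x - z) \<longleftrightarrow> val_ge 1 (y - z)" for z
    using val_ge_add[OF xy, of "y - z"] val_ge_diff[of 1 "x - z" "x - y"] xy by auto
  then show "residue_class x = residue_class y"
    unfolding residue_class_def val_ge_1_iff[symmetric] by auto
qed

definition residue_system :: "'a set \<Rightarrow> bool" where
  "residue_system R \<longleftrightarrow> finite R \<and> card R = q \<and> R \<subseteq> int_ring absv \<and>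
     (\<forall>x\<in>int_ring absv. \<exists>r\<in>R. val_ge 1 (x - r)) \<and>
     (\<forall>r\<in>R. \<forall>r'\<in>R. val_ge 1 (r - r') \<longrightarrow> r = r')"

lemma residue_system_exists: "\<exists>R. residue_system R"
proof -
  define rep where "rep C = (SOME y. y \<in> C)" for C :: "'a set"
  have rep: "rep (residue_class x) \<in> int_ring absv"
    "val_ge 1 (x - rep (residue_class x))"
    "residue_class (rep (residue_class x)) = residue_class x"
    if "x \<in> int_ring absv" for x
  proof -
    have "x \<in> residue_class x"
      using that by (simp add: residue_class_mem)
    then have "rep (residue_class x) \<in> residue_class x"
      unfolding rep_def by (rule someI)
    then show "rep (residue_class x) \<in> int_ring absv" "val_ge 1 (x - rep (residue_class x))"
      by (simp_all add: residue_class_mem)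
    then show "residue_class (rep (residue_class x)) = residue_class x"
      using residue_class_eq_iff that val_ge_diff_commute by blast
  qed
  have "inj_on rep (residue_class ` int_ring absv)"
    by (rule inj_onI) (metis (no_types, lifting) imageE rep(3))
  then have "card (rep ` residue_class ` int_ring absv) = q"
    using card_image card_residue_field by metis
  moreover have "r = r'"
    if R: "r \<in> rep ` residue_class ` int_ring absv" "r' \<in> rep ` residue_class ` int_ring absv"
      and rr': "val_ge 1 (r - r')" for r r'
  proof -
    obtain x y where xy: "x \<in> int_ring absv" "y \<in> int_ring absv"
      and r: "r = rep (residue_class x)" and r': "r' = rep (residue_class y)"
      using R by blast
    have "residue_class r = residue_class r'"
      using residue_class_eq_iff rep(1) xy rr' unfolding r r' by blast
    then show ?thesis
      unfolding r r' rep(3)[OF xy(1)] rep(3)[OF xy(2)] by simp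
  qed
  ultimately have "residue_system (rep ` residue_class ` int_ring absv)"
    unfolding residue_system_def using finite_residue_field rep(1,2) by blast
  then show ?thesis ..
qed

definition residues :: "'a set" where
  "residues = (SOME R. residue_system R)"

lemma residue_system_residues: "residue_system residues"
  unfolding residues_def using residue_system_exists by (rule someI_ex)

lemma finite_residues: "finite residues"
  and card_residues: "card residues = q"
  and residues_int: "r \<in> residues \<Longrightarrow> val_ge 0 r"
  and residues_complete: "val_ge 0 x \<Longrightarrow> \<exists>r\<in>residues. val_ge 1 (x - r)"
  and residues_distinct: "r \<in> residues \<Longrightarrow> r' \<in> residues \<Longrightarrow> val_ge 1 (r - r') \<Longrightarrow> r = r'"
  using residue_system_residues unfolding residue_system_def val_ge_0_iff by auto

lemma card_residues_linear_solutions: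
  assumes "absv w = 1" "val_ge 0 g"
  shows "card {b \<in> residues. val_ge 1 (g + w * b)} = 1"
proof -
  have w0: "w \<noteq> 0"
    using assms by auto
  have "val_ge 0 (- g / w)"
    using assms unfolding val_ge_def absv_divide by simp
  then obtain r where r: "r \<in> residues" "val_ge 1 (- g / w - r)"
    using residues_complete by blast
  have "g + w * b = (- w) * (- g / w - b)" for b
    using w0 by (simp add: field_simps)
  then have sol: "val_ge 1 (g + w * b) \<longleftrightarrow> val_ge 1 (- g / w - b)" for b
    using assms(1) val_ge_unit_mult_iff[of "- w"] by simp
  have "val_ge 1 (- g / w - b) \<longleftrightarrow> b = r" if "b \<in> residues" for b
  proof
    assume "val_ge 1 (- g / w - b)"
    then have "val_ge 1 ((- g / w - r) - (- g / w - b))"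
      using val_ge_diff[OF r(2)] by blast
    then have "val_ge 1 (b - r)"
      by simp
    then show "b = r"
      using residues_distinct that r(1) by blast
  qed (use r in simp)
  then have "{b \<in> residues. val_ge 1 (g + w * b)} = {r}"
    using r(1) sol by auto
  then show ?thesis
    by simp
qed

lemma card_residues_add_solutions: "val_ge 0 g \<Longrightarrow> card {b \<in> residues. val_ge 1 (g + b)} = 1"
  using card_residues_linear_solutions[of 1 g] by simp

lemma finite_reps_mod_pow2:
  "\<exists>F. finite F \<and> (\<forall>f\<in>F. val_ge 0 f) \<and> (\<forall>x. val_ge 0 x \<longrightarrow> (\<exists>f\<in>F. val_ge m (x - f)))"
proof (induction m)
  case 0
  show ?case
    by (rule exI[of _ "{0}"]) (simp add: val_ge_def)
next
  case (Suc m)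
  then obtain F where F: "finite F" "\<forall>f\<in>F. val_ge 0 f" "\<forall>x. val_ge 0 x \<longrightarrow> (\<exists>f\<in>F. val_ge m (x - f))"
    by blast
  define G where "G = (\<lambda>(r, f). r + 2 * f) ` (residues \<times> F)"
  have "finite G"
    unfolding G_def using F(1) finite_residues by simp
  moreover have "\<forall>g\<in>G. val_ge 0 g"
    unfolding G_def using F(2) residues_int val_ge_0_2 by (auto intro!: val_ge_add val_ge_0_mult)
  moreover have "\<exists>g\<in>G. val_ge (Suc m) (x - g)" if x: "val_ge 0 x" for x
  proof -
    obtain r where r: "r \<in> residues" "val_ge 1 (x - r)"
      using residues_complete x by blast
    then obtain y where y: "val_ge 0 y" "x - r = 2 * y"
      using val_ge_1_imp_2_mult by blast
    then obtain f where f: "f \<in> F" "val_ge m (y - f)"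
      using F(3) by blast
    have eq: "x - (r + 2 * f) = 2 * (y - f)"
      using y(2) by (simp add: algebra_simps)
    have "val_ge (Suc m) (x - (r + 2 * f))"
      unfolding eq using f(2) val_ge_2_mult_iff by blast
    moreover have "r + 2 * f \<in> G"
      unfolding G_def using r f by auto
    ultimately show ?thesis
      by blast
  qed
  ultimately show ?case
    by blast
qed

end

section \<open>Haar measure and double counting\<close>

lemma card_product_filter:
  "card {p \<in> A \<times> B. P (fst p) \<and> Q (snd p)} = card {a \<in> A. P a} * card {b \<in> B. Q b}"
proof -
  have "{p \<in> A \<times> B. P (fst p) \<and> Q (snd p)} = {a \<in> A. P a} \<times> {b \<in> B. Q b}"
    by auto
  then show ?thesis
    by (simp add: card_cartesian_product)
qed

lemma card_product_filter_unique_snd: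
  assumes "finite A" "\<And>a. a \<in> A \<Longrightarrow> card {b \<in> B. P a b} = 1"
  shows "card {p \<in> A \<times> B. P (fst p) (snd p)} = card A"
proof -
  have "{p \<in> A \<times> B. P (fst p) (snd p)} = Sigma A (\<lambda>a. {b \<in> B. P a b})"
    by auto
  moreover have "finite {b \<in> B. P a b}" if "a \<in> A" for a
    using assms(2)[OF that] by (intro card_ge_0_finite) simp
  ultimately have "card {p \<in> A \<times> B. P (fst p) (snd p)} = (\<Sum>a\<in>A. card {b \<in> B. P a b})"
    using assms(1) by (simp add: card_SigmaI)
  then show ?thesis
    using assms by simp
qed

locale dyadic_haar = dyadic_field +
  fixes \<mu> :: "('a \<times> 'a) measure"
  assumes haar: "haar_prob_o2 absv \<mu>"
begin

definition O2 :: "('a \<times> 'a) set" where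
  "O2 = int_ring absv \<times> int_ring absv"

lemma mem_O2_iff: "x \<in> O2 \<longleftrightarrow> val_ge 0 (fst x) \<and> val_ge 0 (snd x)"
  unfolding O2_def val_ge_0_iff by (cases x) simp

lemma space_haar: "space \<mu> = O2"
  and sets_haar: "sets \<mu> = sigma_sets O2 (balls2 absv)"
  and emeasure_O2: "emeasure \<mu> O2 = 1"
  and emeasure_translate: "a \<in> O2 \<Longrightarrow> A \<in> sets \<mu> \<Longrightarrow>
    emeasure \<mu> ((\<lambda>x. (fst x + fst a, snd x + snd a)) ` A) = emeasure \<mu> A"
  using haar unfolding haar_prob_o2_def O2_def by auto

lemma finite_measure_haar: "finite_measure \<mu>"
  by (rule finite_measureI) (simp add: space_haar emeasure_O2)

lemma measure_O2: "measure \<mu> O2 = 1"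
  using emeasure_O2 by (simp add: measure_def)

definition periodic :: "nat \<Rightarrow> ('a \<times> 'a) set \<Rightarrow> bool" where
  "periodic m A \<longleftrightarrow> A \<subseteq> O2 \<and>
     (\<forall>x\<in>A. \<forall>y\<in>O2. val_ge m (fst y - fst x) \<and> val_ge m (snd y - snd x) \<longrightarrow> y \<in> A)"

definition shift :: "nat \<Rightarrow> 'a \<times> 'a \<Rightarrow> 'a \<times> 'a \<Rightarrow> 'a \<times> 'a" where
  "shift m x p = (fst x + 2 ^ m * fst p, snd x + 2 ^ m * snd p)"

definition scale :: "nat \<Rightarrow> ('a \<times> 'a) set \<Rightarrow> ('a \<times> 'a) set" where
  "scale j D = (\<lambda>x. (2 ^ j * fst x, 2 ^ j * snd x)) ` D"

lemma periodicD:
  "periodic m A \<Longrightarrow> x \<in> A \<Longrightarrow> y \<in> O2 \<Longrightarrow> val_ge m (fst y - fst x) \<Longrightarrow>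
    val_ge m (snd y - snd x) \<Longrightarrow> y \<in> A"
  unfolding periodic_def by blast

lemma periodic_O2: "periodic 0 O2"
  unfolding periodic_def by simp

lemma periodic_subset: "periodic m A \<Longrightarrow> A \<subseteq> O2"
  unfolding periodic_def by blast

lemma shift_mem_O2: "x \<in> O2 \<Longrightarrow> p \<in> O2 \<Longrightarrow> shift m x p \<in> O2"
  unfolding shift_def mem_O2_iff by (auto intro: val_ge_add val_ge_0_mult val_ge_0_pow2)

lemma ball_in_sets:
  assumes "f \<in> O2"
  shows "{y \<in> O2. val_ge m (fst y - fst f) \<and> val_ge m (snd y - snd f)} \<in> sets \<mu>"
proof -
  have "{y \<in> O2. val_ge m (fst y - fst f) \<and> val_ge m (snd y - snd f)} \<in> balls2 absv"
    unfolding balls2_def val_ge_def O2_def[symmetric]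
    using assms q_ge_2 by (intro CollectI exI[of _ f] exI[of _ "(1 / real q) ^ m"]) (auto simp: O2_def)
  then show ?thesis
    unfolding sets_haar by (rule sigma_sets.Basic)
qed

lemma periodic_in_sets:
  assumes "periodic m A"
  shows "A \<in> sets \<mu>"
proof -
  obtain F where F: "finite F" "\<forall>f\<in>F. val_ge 0 f" "\<forall>x. val_ge 0 x \<longrightarrow> (\<exists>f\<in>F. val_ge m (x - f))"
    using finite_reps_mod_pow2[of m] by blast
  define ball where "ball f = {y \<in> O2. val_ge m (fst y - fst f) \<and> val_ge m (snd y - snd f)}" for f
  have "A = (\<Union>f\<in>(F \<times> F) \<inter> A. ball f)"
  proof (intro set_eqI iffI)
    fix x assume x: "x \<in> A"
    then have "x \<in> O2"
      using periodic_subset[OF assms] by blast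
    then have "val_ge 0 (fst x)" "val_ge 0 (snd x)"
      unfolding mem_O2_iff by simp_all
    then obtain f1 f2 where f: "f1 \<in> F" "f2 \<in> F" "val_ge m (fst x - f1)" "val_ge m (snd x - f2)"
      using F(3) by blast
    moreover have "(f1, f2) \<in> O2"
      using f F(2) unfolding mem_O2_iff by simp
    ultimately have "(f1, f2) \<in> A"
      using periodicD[OF assms x] val_ge_diff_commute by simp
    moreover have "x \<in> ball (f1, f2)"
      unfolding ball_def using f x assms periodic_subset by auto
    ultimately show "x \<in> (\<Union>f\<in>(F \<times> F) \<inter> A. ball f)"
      using f by blast
  next
    fix x assume "x \<in> (\<Union>f\<in>(F \<times> F) \<inter> A. ball f)"
    then show "x \<in> A"
      using assms unfolding periodic_def ball_def by blast
  qed
  moreover have "(\<Union>f\<in>(F \<times> F) \<inter> A. ball f) \<in> sets \<mu>"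
    using F(1) assms periodic_subset unfolding ball_def by (intro sets.finite_UN ball_in_sets) auto
  ultimately show ?thesis
    by simp
qed

lemma periodic_shift_preimage:
  assumes "periodic m' C" "g \<in> O2"
  shows "periodic m' {x \<in> O2. shift m x g \<in> C}"
  unfolding periodic_def
proof (intro conjI ballI impI)
  fix x y assume x: "x \<in> {x \<in> O2. shift m x g \<in> C}" and y: "y \<in> O2"
    and close: "val_ge m' (fst y - fst x) \<and> val_ge m' (snd y - snd x)"
  have "shift m y g \<in> C"
    using assms(1) x shift_mem_O2[OF y assms(2)] close
    unfolding periodic_def by (fastforce simp: shift_def)
  then show "y \<in> {x \<in> O2. shift m x g \<in> C}"
    using y by simp
qed auto

text \<open>The preimage is the translate of \<open>C\<close> by \<open>-2\<^sup>m g\<close>.\<close>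
lemma measure_shift_preimage:
  assumes "periodic m' C" "g \<in> O2"
  shows "measure \<mu> {x \<in> O2. shift m x g \<in> C} = measure \<mu> C"
proof -
  define a where "a = (- (2 ^ m * fst g), - (2 ^ m * snd g))"
  have a: "a \<in> O2"
    using assms(2) unfolding a_def mem_O2_iff by (auto intro: val_ge_0_mult val_ge_0_pow2)
  have "{x \<in> O2. shift m x g \<in> C} = (\<lambda>x. (fst x + fst a, snd x + snd a)) ` C"
  proof (intro set_eqI iffI)
    fix x assume "x \<in> {x \<in> O2. shift m x g \<in> C}"
    moreover have "x = (fst (shift m x g) + fst a, snd (shift m x g) + snd a)"
      unfolding a_def shift_def by simp
    ultimately show "x \<in> (\<lambda>x. (fst x + fst a, snd x + snd a)) ` C"
      by blast
  next
    fix x assume "x \<in> (\<lambda>x. (fst x + fst a, snd x + snd a)) ` C"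
    then obtain y where y: "y \<in> C" "x = (fst y + fst a, snd y + snd a)"
      by blast
    have "y \<in> O2"
      using y(1) periodic_subset[OF assms(1)] by blast
    then have "x \<in> O2"
      using y(2) a unfolding mem_O2_iff by (auto intro: val_ge_add)
    moreover have "shift m x g = y"
      unfolding y(2) a_def shift_def by simp
    ultimately show "x \<in> {x \<in> O2. shift m x g \<in> C}"
      using y(1) by simp
  qed
  then show ?thesis
    using emeasure_translate[OF a periodic_in_sets[OF assms(1)]] by (simp add: measure_def)
qed

text \<open>Double counting of the pairs \<open>(x, j)\<close> with \<open>x + 2\<^sup>m g\<^sub>j \<in> C\<close>.\<close>
lemma measure_count_translates:
  assumes A: "periodic m A" and C: "periodic m' C" and "C \<subseteq> A" and J: "finite J"
    and g: "\<And>j. j \<in> J \<Longrightarrow> g j \<in> O2"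
    and count: "\<And>x. x \<in> A \<Longrightarrow> card {j \<in> J. shift m x (g j) \<in> C} = k"
  shows "real (card J) * measure \<mu> C = real k * measure \<mu> A"
proof -
  define P where "P j = {x \<in> O2. shift m x (g j) \<in> C}" for j
  have P_in_sets: "P j \<in> sets \<mu>" if "j \<in> J" for j
    unfolding P_def using periodic_in_sets periodic_shift_preimage C g that by blast
  have P_subset: "P j \<subseteq> A" if "j \<in> J" for j
  proof
    fix x assume x: "x \<in> P j"
    have "val_ge m (fst x - fst (shift m x (g j)))" "val_ge m (snd x - snd (shift m x (g j)))"
      using g[OF that] unfolding shift_def mem_O2_iff by (simp_all add: val_ge_pow2_mult)
    then show "x \<in> A"
      using A x \<open>C \<subseteq> A\<close> unfolding periodic_def P_def by blast
  qed
  have indicator_sum: "(\<Sum>j\<in>J. indicator (P j) x) = real k * indicator A x" for x :: "'a \<times> 'a"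
  proof (cases "x \<in> A")
    case True
    have "{j \<in> J. x \<in> P j} = {j \<in> J. shift m x (g j) \<in> C}"
      unfolding P_def using True periodic_subset[OF A] by auto
    then have "(\<Sum>j\<in>J. indicator (P j) x :: real) = real k"
      using J count[OF True] by (simp add: indicator_def sum.If_cases Int_def conj_commute)
    then show ?thesis
      using True by simp
  next
    case False
    then have "x \<notin> P j" if "j \<in> J" for j
      using P_subset[OF that] by blast
    then show ?thesis
      using False by simp
  qed
  have "real (card J) * measure \<mu> C = (\<Sum>j\<in>J. measure \<mu> (P j))"
    unfolding P_def using measure_shift_preimage[OF C g] by simp
  also have "\<dots> = (\<Sum>j\<in>J. integral\<^sup>L \<mu> (indicator (P j)))"
    using P_in_sets sets.sets_into_space by (intro sum.cong) (auto simp: Int_absorb2)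
  also have "\<dots> = integral\<^sup>L \<mu> (\<lambda>x. \<Sum>j\<in>J. indicator (P j) x)"
    using P_in_sets finite_measure.emeasure_eq_measure[OF finite_measure_haar]
    by (intro Bochner_Integration.integral_sum[symmetric]) (simp add: less_top[symmetric])
  also have "\<dots> = real k * measure \<mu> A"
    using periodic_in_sets[OF A] sets.sets_into_space by (simp add: indicator_sum Int_absorb2)
  finally show ?thesis .
qed

lemma mem_scale_iff: "x \<in> scale j D \<longleftrightarrow> (\<exists>y\<in>D. x = (2 ^ j * fst y, 2 ^ j * snd y))"
  unfolding scale_def by auto

lemma scale_mem_scale_iff [simp]: "(2 ^ j * a, 2 ^ j * b) \<in> scale j D \<longleftrightarrow> (a, b) \<in> D"
  unfolding mem_scale_iff by force

lemma scale_0 [simp]: "scale 0 D = D"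
  unfolding scale_def by simp

lemma scale_scale_1: "scale j (scale 1 D) = scale (Suc j) D"
  unfolding scale_def image_image by (simp add: mult_ac)

lemma scale_mono: "C \<subseteq> A \<Longrightarrow> scale j C \<subseteq> scale j A"
  unfolding scale_def by blast

lemma mem_scale_1_O2_iff: "y \<in> scale 1 O2 \<longleftrightarrow> y \<in> O2 \<and> val_ge 1 (fst y) \<and> val_ge 1 (snd y)"
proof
  assume "y \<in> scale 1 O2"
  then obtain z where "z \<in> O2" and y: "y = (2 * fst z, 2 * snd z)"
    unfolding mem_scale_iff by auto
  then have z: "val_ge 0 (fst z)" "val_ge 0 (snd z)"
    unfolding mem_O2_iff by simp_all
  show "y \<in> O2 \<and> val_ge 1 (fst y) \<and> val_ge 1 (snd y)"
    unfolding mem_O2_iff y using z val_ge_1_2_mult val_ge_0_mult[OF val_ge_0_2] by simp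
next
  assume "y \<in> O2 \<and> val_ge 1 (fst y) \<and> val_ge 1 (snd y)"
  then obtain y1 y2 where "val_ge 0 y1" "fst y = 2 * y1" "val_ge 0 y2" "snd y = 2 * y2"
    using val_ge_1_imp_2_mult by metis
  then show "y \<in> scale 1 O2"
    using scale_mem_scale_iff[of 1 y1 y2 O2] unfolding mem_O2_iff by (cases y) simp
qed

lemma periodic_scale:
  assumes "periodic m D"
  shows "periodic (m + j) (scale j D)"
  unfolding periodic_def
proof (intro conjI ballI impI)
  show "scale j D \<subseteq> O2"
  proof
    fix x assume "x \<in> scale j D"
    then obtain y where "y \<in> O2" "x = (2 ^ j * fst y, 2 ^ j * snd y)"
      using periodic_subset[OF assms] unfolding mem_scale_iff by blast
    then show "x \<in> O2"
      unfolding mem_O2_iff by (simp add: val_ge_0_mult val_ge_0_pow2)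
  qed
  fix x y assume x: "x \<in> scale j D" and y: "y \<in> O2"
    and close: "val_ge (m + j) (fst y - fst x) \<and> val_ge (m + j) (snd y - snd x)"
  obtain z where z: "z \<in> D" "x = (2 ^ j * fst z, 2 ^ j * snd z)"
    using x unfolding mem_scale_iff by blast
  have "z \<in> O2"
    using z(1) periodic_subset[OF assms] by blast
  then have z_int: "val_ge 0 (fst z)" "val_ge 0 (snd z)"
    unfolding mem_O2_iff by simp_all
  obtain w1 w2 where w: "val_ge 0 w1" "fst y = 2 ^ j * w1" "val_ge m (w1 - fst z)"
    "val_ge 0 w2" "snd y = 2 ^ j * w2" "val_ge m (w2 - snd z)"
    using val_ge_close_to_pow2_mult[of m j "fst y" "fst z"] val_ge_close_to_pow2_mult[of m j "snd y" "snd z"]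
      close z(2) z_int by auto
  have "(w1, w2) \<in> D"
    using periodicD[OF assms z(1), of "(w1, w2)"] w unfolding mem_O2_iff by simp
  then show "y \<in> scale j D"
    using w scale_mem_scale_iff[of j w1 w2 D] by (cases y) simp
qed

lemma measure_scale_count_residues:
  assumes A: "periodic m A" and C: "periodic m' C" and "C \<subseteq> A"
    and g: "\<And>p. p \<in> residues \<times> residues \<Longrightarrow> g p \<in> O2"
    and count: "\<And>x. x \<in> A \<Longrightarrow> card {p \<in> residues \<times> residues. shift m x (g p) \<in> C} = k"
  shows "measure \<mu> (scale j C) = real k / real q ^ 2 * measure \<mu> (scale j A)"
proof -
  have "real (card (residues \<times> residues)) * measure \<mu> (scale j C) = real k * measure \<mu> (scale j A)"
  proof (rule measure_count_translates[OF periodic_scale[OF A] periodic_scale[OF C]])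
    show "scale j C \<subseteq> scale j A"
      using \<open>C \<subseteq> A\<close> by (rule scale_mono)
    show "finite (residues \<times> residues)"
      using finite_residues by simp
  next
    fix x assume "x \<in> scale j A"
    then obtain y where y: "y \<in> A" "x = (2 ^ j * fst y, 2 ^ j * snd y)"
      unfolding mem_scale_iff by blast
    have "shift (m + j) x (g p) = (2 ^ j * fst (shift m y (g p)), 2 ^ j * snd (shift m y (g p)))" for p
      unfolding y(2) shift_def by (simp add: power_add algebra_simps)
    then show "card {p \<in> residues \<times> residues. shift (m + j) x (g p) \<in> scale j C} = k"
      using count[OF y(1)] by simp
  qed (use g in auto)
  then show ?thesis
    using q_ge_2 finite_residues card_residues
    by (simp add: card_cartesian_product power2_eq_square field_simps)
qed

lemma measure_scale_O2: "measure \<mu> (scale j O2) = (1 / real q) ^ (2 * j)"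
proof (induction j)
  case 0
  show ?case
    using measure_O2 by simp
next
  case (Suc j)
  have C: "periodic 1 (scale 1 O2)"
    using periodic_scale[OF periodic_O2, of 1] by simp
  have sub: "scale 1 O2 \<subseteq> O2"
    using mem_scale_1_O2_iff by blast
  have residue_pair: "id p \<in> O2" if "p \<in> residues \<times> residues" for p
    using that residues_int unfolding mem_O2_iff by auto
  have count: "card {p \<in> residues \<times> residues. shift 0 x p \<in> scale 1 O2} = 1" if "x \<in> O2" for x
  proof -
    have "{p \<in> residues \<times> residues. shift 0 x p \<in> scale 1 O2} =
        {p \<in> residues \<times> residues. val_ge 1 (fst x + fst p) \<and> val_ge 1 (snd x + snd p)}"
      using that residues_int unfolding mem_scale_1_O2_iff shift_def mem_O2_iff
      by (auto intro: val_ge_add)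
    also have "card \<dots> = card {a \<in> residues. val_ge 1 (fst x + a)} * card {b \<in> residues. val_ge 1 (snd x + b)}"
      by (rule card_product_filter)
    also have "\<dots> = 1"
      using that card_residues_add_solutions unfolding mem_O2_iff by simp
    finally show ?thesis .
  qed
  have "measure \<mu> (scale j (scale 1 O2)) = real 1 / real q ^ 2 * measure \<mu> (scale j O2)"
    using measure_scale_count_residues[OF periodic_O2 C sub residue_pair] count by simp
  then show ?case
    unfolding scale_scale_1 using Suc.IH by (simp add: power_mult_distrib power2_eq_square)
qed

end

section \<open>The norm form\<close>

locale dyadic_norm_form = dyadic_haar +
  fixes v :: 'a
  assumes v_unit: "absv v = 1"
begin

definition norm_form :: "'a \<times> 'a \<Rightarrow> 'a" where
  "norm_form x = fst x ^ 2 - (1 + 2 * v) * snd x ^ 2"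

definition solutions :: "'a \<Rightarrow> nat \<Rightarrow> ('a \<times> 'a) set" where
  "solutions \<tau> n = {x \<in> O2. val_ge n (norm_form x - \<tau>\<^sup>2)}"

lemma val_ge_0_v: "val_ge 0 v"
  using v_unit unit_iff by blast

lemma val_ge_0_norm_form: "x \<in> O2 \<Longrightarrow> val_ge 0 (norm_form x)"
  unfolding norm_form_def mem_O2_iff using val_ge_0_v val_ge_0_2
  by (intro val_ge_diff val_ge_0_power val_ge_0_mult val_ge_add) (auto simp: val_ge_def)

lemma norm_form_expand:
  "norm_form (x1, x2) = (x1 - x2)\<^sup>2 + 2 * ((x1 - x2) * x2 - v * x2\<^sup>2)"
  unfolding norm_form_def by (simp add: algebra_simps power2_eq_square)

text \<open>\<open>\<Delta> = 1 + 2v\<close> is not a square modulo \<open>4\<close>, so \<open>x\<^sub>1\<^sup>2 - \<Delta> x\<^sub>2\<^sup>2 \<equiv> 0 (mod 4)\<close> forces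
  both coordinates to be even.\<close>
lemma norm_form_val_ge_2:
  assumes "x \<in> O2" "val_ge 2 (norm_form x)"
  shows "val_ge 1 (fst x) \<and> val_ge 1 (snd x)"
proof -
  obtain x1 x2 where x: "x = (x1, x2)"
    by (cases x)
  have int: "val_ge 0 x1" "val_ge 0 x2"
    using assms(1) unfolding x mem_O2_iff by auto
  define d where "d = x1 - x2"
  have d: "val_ge 0 d"
    unfolding d_def using int by (rule val_ge_diff)
  have "val_ge 1 (norm_form x)"
    using val_ge_mono[OF _ assms(2)] by simp
  moreover have "val_ge 1 (2 * (d * x2 - v * x2\<^sup>2))"
    using d int val_ge_0_v
    by (intro val_ge_1_2_mult val_ge_diff val_ge_0_mult val_ge_0_power)
  ultimately have "val_ge 1 (d\<^sup>2)"
    using val_ge_diff unfolding x norm_form_expand d_def[symmetric] by fastforce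
  then have "val_ge 1 d"
    using val_ge_1_square_diff[OF d val_ge_zero[of 0]] by simp
  then obtain e where e: "val_ge 0 e" "d = 2 * e"
    using val_ge_1_imp_2_mult by blast
  have eq: "2 * (v * x2\<^sup>2) = 4 * (e * e + e * x2) - norm_form x"
    unfolding x norm_form_expand d_def[symmetric] e(2) by (simp add: algebra_simps power2_eq_square)
  have "val_ge 2 (4 * (e * e + e * x2))"
    using e(1) int by (intro val_ge_2_4_mult val_ge_add val_ge_0_mult)
  then have "val_ge 2 (2 * (v * x2\<^sup>2))"
    unfolding eq using assms(2) by (rule val_ge_diff)
  then have "val_ge 1 (x2 * x2)"
    using val_ge_2_2_mult_iff val_ge_unit_mult_iff[OF v_unit] by (simp add: power2_eq_square)
  then have "val_ge 1 x2"
    using val_ge_1_mult[OF int(2) int(2)] by blast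
  moreover have "x1 = d + x2"
    unfolding d_def by simp
  ultimately show ?thesis
    using \<open>val_ge 1 d\<close> val_ge_add unfolding x by simp
qed

lemma solutions_1_iff:
  assumes "x \<in> O2" "val_ge 0 \<tau>"
  shows "val_ge 1 (norm_form x - \<tau>\<^sup>2) \<longleftrightarrow> val_ge 1 (fst x - snd x - \<tau>)"
proof -
  obtain x1 x2 where x: "x = (x1, x2)"
    by (cases x)
  have int: "val_ge 0 x1" "val_ge 0 x2"
    using assms(1) unfolding x mem_O2_iff by auto
  define d where "d = x1 - x2"
  have d: "val_ge 0 d"
    unfolding d_def using int by (rule val_ge_diff)
  have even: "val_ge 1 (2 * (d * x2 - v * x2\<^sup>2))"
    using d int val_ge_0_v
    by (intro val_ge_1_2_mult val_ge_diff val_ge_0_mult val_ge_0_power)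
  have eq: "norm_form x - \<tau>\<^sup>2 = (d\<^sup>2 - \<tau>\<^sup>2) + 2 * (d * x2 - v * x2\<^sup>2)"
    unfolding x norm_form_expand d_def by simp
  have "val_ge 1 (norm_form x - \<tau>\<^sup>2) \<longleftrightarrow> val_ge 1 (d\<^sup>2 - \<tau>\<^sup>2)"
    unfolding eq using even val_ge_add val_ge_diff by fastforce
  also have "\<dots> \<longleftrightarrow> val_ge 1 (d - \<tau>)"
  proof
    assume "val_ge 1 (d - \<tau>)"
    moreover have "d\<^sup>2 - \<tau>\<^sup>2 = (d - \<tau>) * (d + \<tau>)"
      by (simp add: algebra_simps power2_eq_square)
    ultimately show "val_ge 1 (d\<^sup>2 - \<tau>\<^sup>2)"
      using val_ge_mult_0 val_ge_add d assms(2) by metis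
  qed (use val_ge_1_square_diff d assms(2) in blast)
  finally show ?thesis
    unfolding x d_def by simp
qed

lemma solutions_2_iff:
  assumes "x \<in> O2" "absv u = 1"
  shows "val_ge 2 (norm_form x - u\<^sup>2) \<longleftrightarrow>
    val_ge 1 (fst x - snd x - u) \<and> (val_ge 1 (snd x) \<or> val_ge 1 (v * snd x - u))"
proof -
  obtain x1 x2 where x: "x = (x1, x2)"
    by (cases x)
  have int: "val_ge 0 x1" "val_ge 0 x2"
    using assms(1) unfolding x mem_O2_iff by auto
  have u: "val_ge 0 u"
    using assms(2) unit_iff by blast
  define d where "d = x1 - x2"
  have d: "val_ge 0 d" "val_ge 0 (d - v * x2)"
    unfolding d_def using int val_ge_0_v by (auto intro: val_ge_diff val_ge_0_mult)
  have mod_4: "val_ge 2 (norm_form x - u\<^sup>2) \<longleftrightarrow> val_ge 1 (x2 * (d - v * x2))"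
    if du: "val_ge 1 (d - u)"
  proof -
    obtain e where e: "val_ge 0 e" "d = u + 2 * e"
      using val_ge_1_imp_2_mult[OF du] by (auto simp: algebra_simps)
    have eq: "norm_form x - u\<^sup>2 = 4 * (u * e + e * e) + 2 * (x2 * (d - v * x2))"
      unfolding x norm_form_expand d_def[symmetric] e(2) by (simp add: algebra_simps power2_eq_square)
    have "val_ge 2 (4 * (u * e + e * e))"
      using u e(1) by (intro val_ge_2_4_mult val_ge_add val_ge_0_mult)
    then have "val_ge 2 (norm_form x - u\<^sup>2) \<longleftrightarrow> val_ge 2 (2 * (x2 * (d - v * x2)))"
      unfolding eq using val_ge_add val_ge_diff by fastforce
    then show ?thesis
      using val_ge_2_2_mult_iff by simp
  qed
  have "val_ge 2 (norm_form x - u\<^sup>2) \<longleftrightarrow> val_ge 1 (d - u) \<and> val_ge 1 (x2 * (d - v * x2))"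
  proof (cases "val_ge 1 (d - u)")
    case False
    then have "\<not> val_ge 1 (norm_form x - u\<^sup>2)"
      using solutions_1_iff[OF assms(1) u] unfolding x d_def by simp
    then show ?thesis
      using False val_ge_mono[of 1 2] by auto
  qed (use mod_4 in simp)
  also have "\<dots> \<longleftrightarrow> val_ge 1 (d - u) \<and> (val_ge 1 x2 \<or> val_ge 1 (v * x2 - u))"
  proof -
    have "val_ge 1 (d - v * x2) \<longleftrightarrow> val_ge 1 (v * x2 - u)" if "val_ge 1 (d - u)"
      using val_ge_diff[OF that, of "d - v * x2"] val_ge_diff[OF that, of "v * x2 - u"]
      by (auto simp: algebra_simps)
    moreover have "val_ge 1 (x2 * (d - v * x2)) \<longleftrightarrow> val_ge 1 x2 \<or> val_ge 1 (d - v * x2)"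
      using val_ge_1_mult[OF int(2) d(2)] val_ge_mult_0[OF _ d(2)] val_ge_0_mult[OF int(2)] by blast
    ultimately show ?thesis
      by blast
  qed
  finally show ?thesis
    unfolding x d_def by simp
qed

lemma solutions_subset_O2: "solutions \<tau> n \<subseteq> O2"
  unfolding solutions_def by auto

lemma solutions_0: "val_ge 0 \<tau> \<Longrightarrow> solutions \<tau> 0 = O2"
  unfolding solutions_def using val_ge_0_norm_form val_ge_0_power val_ge_diff by blast

lemma solutions_antimono: "n \<le> n' \<Longrightarrow> solutions \<tau> n' \<subseteq> solutions \<tau> n"
  unfolding solutions_def using val_ge_mono by blast

lemma periodic_solutions:
  assumes "n \<le> m + 1" "n \<le> 2 * m" "val_ge 0 \<tau>"
  shows "periodic m (solutions \<tau> n)"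
  unfolding periodic_def
proof (intro conjI ballI impI)
  fix x y assume x: "x \<in> solutions \<tau> n" and y: "y \<in> O2"
    and close: "val_ge m (fst y - fst x) \<and> val_ge m (snd y - snd x)"
  have int: "val_ge 0 (fst x)" "val_ge 0 (snd x)"
    using x unfolding solutions_def mem_O2_iff by auto
  have increment: "val_ge n (e * (2 * z + e))" if "val_ge m e" "val_ge 0 z" for e z
  proof -
    have "val_ge n (e * (2 * z))"
      using val_ge_mono[OF _ val_ge_mult[OF that(1) val_ge_1_2_mult[OF that(2)]]] assms(1) by simp
    moreover have "val_ge n (e * e)"
      using val_ge_mono[OF _ val_ge_mult[OF that(1) that(1)]] assms(2) by simp
    ultimately show ?thesis
      using val_ge_add by (simp add: distrib_left)
  qed
  have "norm_form y - \<tau>\<^sup>2 = (norm_form x - \<tau>\<^sup>2) + (fst y - fst x) * (2 * fst x + (fst y - fst x))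
      - (1 + 2 * v) * ((snd y - snd x) * (2 * snd x + (snd y - snd x)))"
    unfolding norm_form_def by (simp add: algebra_simps power2_eq_square)
  moreover have "val_ge n (norm_form x - \<tau>\<^sup>2)"
    using x unfolding solutions_def by simp
  moreover have "val_ge n ((fst y - fst x) * (2 * fst x + (fst y - fst x)))"
    using increment close int(1) by blast
  moreover have "val_ge n ((1 + 2 * v) * ((snd y - snd x) * (2 * snd x + (snd y - snd x))))"
  proof (rule val_ge_0_mult)
    show "val_ge 0 (1 + 2 * v)"
      using val_ge_0_v val_ge_0_2 by (intro val_ge_add val_ge_0_mult) (auto simp: val_ge_def)
  qed (use increment close int(2) in blast)
  ultimately have "val_ge n (norm_form y - \<tau>\<^sup>2)"
    by (metis val_ge_add val_ge_diff)
  then show "y \<in> solutions \<tau> n"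
    unfolding solutions_def using y by simp
qed (rule solutions_subset_O2)

lemma solutions_scale_1:
  assumes "val_ge 0 \<sigma>"
  shows "solutions (2 * \<sigma>) (n + 2) = scale 1 (solutions \<sigma> n)"
proof -
  have eq: "norm_form (2 * y1, 2 * y2) - (2 * \<sigma>)\<^sup>2 = 4 * (norm_form (y1, y2) - \<sigma>\<^sup>2)" for y1 y2
    unfolding norm_form_def by (simp add: algebra_simps power2_eq_square)
  show ?thesis
  proof (intro set_eqI iffI)
    fix x assume x: "x \<in> solutions (2 * \<sigma>) (n + 2)"
    then have "val_ge 2 (norm_form x - (2 * \<sigma>)\<^sup>2)"
      using val_ge_mono[of 2 "n + 2"] unfolding solutions_def by auto
    moreover have "val_ge 2 ((2 * \<sigma>)\<^sup>2)"
      using val_ge_2_4_mult[OF val_ge_0_mult[OF assms assms]] by (simp add: power2_eq_square)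
    ultimately have "val_ge 2 ((norm_form x - (2 * \<sigma>)\<^sup>2) + (2 * \<sigma>)\<^sup>2)"
      by (rule val_ge_add)
    then have "val_ge 2 (norm_form x)"
      by simp
    then have "val_ge 1 (fst x)" "val_ge 1 (snd x)"
      using norm_form_val_ge_2 x unfolding solutions_def by auto
    then obtain y1 y2 where y: "val_ge 0 y1" "val_ge 0 y2" "fst x = 2 * y1" "snd x = 2 * y2"
      using val_ge_1_imp_2_mult by metis
    then have x_eq: "x = (2 * y1, 2 * y2)"
      by (simp add: prod_eq_iff)
    have "val_ge (n + 2) (norm_form x - (2 * \<sigma>)\<^sup>2)"
      using x unfolding solutions_def by simp
    then have "val_ge (n + 2) (4 * (norm_form (y1, y2) - \<sigma>\<^sup>2))"
      unfolding x_eq eq .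
    then have "val_ge n (norm_form (y1, y2) - \<sigma>\<^sup>2)"
      using val_ge_4_mult_iff by blast
    then have "(y1, y2) \<in> solutions \<sigma> n"
      unfolding solutions_def mem_O2_iff using y by simp
    then show "x \<in> scale 1 (solutions \<sigma> n)"
      unfolding x_eq using scale_mem_scale_iff[of 1] by simp
  next
    fix x assume "x \<in> scale 1 (solutions \<sigma> n)"
    then obtain y1 y2 where y: "(y1, y2) \<in> solutions \<sigma> n" and x_eq: "x = (2 * y1, 2 * y2)"
      unfolding mem_scale_iff by auto
    then have "val_ge (n + 2) (norm_form x - (2 * \<sigma>)\<^sup>2)"
      unfolding x_eq eq val_ge_4_mult_iff solutions_def by simp
    moreover have "x \<in> O2"
      using y unfolding x_eq solutions_def mem_O2_iff by (simp add: val_ge_0_mult val_ge_0_2)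
    ultimately show "x \<in> solutions (2 * \<sigma>) (n + 2)"
      unfolding solutions_def by simp
  qed
qed

lemma solutions_scale:
  "val_ge 0 \<sigma> \<Longrightarrow> solutions (2 ^ j * \<sigma>) (n + 2 * j) = scale j (solutions \<sigma> n)"
proof (induction j arbitrary: n \<sigma>)
  case 0
  show ?case
    by simp
next
  case (Suc j)
  have "solutions (2 ^ Suc j * \<sigma>) (n + 2 * Suc j) = solutions (2 ^ j * (2 * \<sigma>)) ((n + 2) + 2 * j)"
    by (simp add: ac_simps)
  also have "\<dots> = scale j (solutions (2 * \<sigma>) (n + 2))"
    by (rule Suc.IH[OF val_ge_0_mult[OF val_ge_0_2 Suc.prems]])
  also have "\<dots> = scale (Suc j) (solutions \<sigma> n)"
    using solutions_scale_1[OF Suc.prems] scale_scale_1 by simp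
  finally show ?case .
qed

lemma translate_mem_solutions_1_iff:
  assumes x: "x \<in> O2" and \<tau>: "val_ge 0 \<tau>" and r: "val_ge 0 r"
  shows "(fst x + r, snd x) \<in> solutions \<tau> 1 \<longleftrightarrow> val_ge 1 ((fst x - snd x - \<tau>) + r)"
proof -
  have y: "(fst x + r, snd x) \<in> O2"
    using x r unfolding mem_O2_iff by (simp add: val_ge_add)
  have e: "fst x + r - snd x - \<tau> = (fst x - snd x - \<tau>) + r"
    by (simp add: algebra_simps)
  have "(fst x + r, snd x) \<in> solutions \<tau> 1 \<longleftrightarrow> val_ge 1 (norm_form (fst x + r, snd x) - \<tau>\<^sup>2)"
    using y unfolding solutions_def by simp
  also have "\<dots> \<longleftrightarrow> val_ge 1 (fst x + r - snd x - \<tau>)"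
    using solutions_1_iff[OF y \<tau>] unfolding fst_conv snd_conv .
  finally show ?thesis
    by (simp only: e)
qed

lemma measure_solutions_1:
  assumes \<tau>: "val_ge 0 \<tau>"
  shows "measure \<mu> (scale j (solutions \<tau> 1)) = (1 / real q) ^ (2 * j + 1)"
proof -
  define g where "g p = (fst p, 0 :: 'a)" for p :: "'a \<times> 'a"
  have g: "g p \<in> O2" if "p \<in> residues \<times> residues" for p
    using that residues_int unfolding g_def mem_O2_iff by (auto simp: val_ge_def)
  have count: "card {p \<in> residues \<times> residues. shift 0 x (g p) \<in> solutions \<tau> 1} = 1 * q"
    if x: "x \<in> O2" for x
  proof -
    have "{p \<in> residues \<times> residues. shift 0 x (g p) \<in> solutions \<tau> 1} =
        {p \<in> residues \<times> residues. val_ge 1 ((fst x - snd x - \<tau>) + fst p) \<and> True}"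
      using translate_mem_solutions_1_iff[OF x \<tau>] residues_int unfolding shift_def g_def by auto
    also have "card \<dots> = card {a \<in> residues. val_ge 1 ((fst x - snd x - \<tau>) + a)} * card {b \<in> residues. True}"
      by (rule card_product_filter)
    finally show ?thesis
      using x \<tau> card_residues_add_solutions card_residues unfolding mem_O2_iff
      by (simp add: val_ge_diff)
  qed
  have "periodic 1 (solutions \<tau> 1)"
    using periodic_solutions[OF _ _ \<tau>] by simp
  then have "measure \<mu> (scale j (solutions \<tau> 1)) = real (1 * q) / real q ^ 2 * measure \<mu> (scale j O2)"
    using measure_scale_count_residues[OF periodic_O2 _ solutions_subset_O2 g count] by blast
  then show ?thesis
    using q_ge_2 by (simp add: measure_scale_O2 power2_eq_square)
qed

lemma card_residues_two_branches:
  assumes u: "absv u = 1" and s: "val_ge 0 s"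
  shows "card {b \<in> residues. val_ge 1 (s + b) \<or> val_ge 1 ((v * s - u) + v * b)} = 2"
proof -
  have "\<not> (val_ge 1 (s + b) \<and> val_ge 1 ((v * s - u) + v * b))" for b
  proof
    assume b: "val_ge 1 (s + b) \<and> val_ge 1 ((v * s - u) + v * b)"
    have "u = v * (s + b) - ((v * s - u) + v * b)"
      by (simp add: algebra_simps)
    then have "val_ge 1 u"
      using b val_ge_diff[OF val_ge_0_mult[OF val_ge_0_v]] by metis
    then show False
      using u unit_iff by blast
  qed
  then have "{b \<in> residues. val_ge 1 (s + b) \<or> val_ge 1 ((v * s - u) + v * b)} =
      {b \<in> residues. val_ge 1 (s + b)} \<union> {b \<in> residues. val_ge 1 ((v * s - u) + v * b)}
    \<and> {b \<in> residues. val_ge 1 (s + b)} \<inter> {b \<in> residues. val_ge 1 ((v * s - u) + v * b)} = {}"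
    by blast
  moreover have "val_ge 0 (v * s - u)"
    using u s val_ge_0_v unit_iff by (blast intro: val_ge_diff val_ge_0_mult)
  ultimately show ?thesis
    using finite_residues card_residues_add_solutions[OF s] card_residues_linear_solutions[OF v_unit]
    by (simp add: card_Un_disjoint)
qed

lemma translate_mem_solutions_2_iff:
  assumes x: "x \<in> O2" and u: "absv u = 1" and a: "val_ge 0 a" and b: "val_ge 0 b"
  shows "(fst x + (a + b), snd x + b) \<in> solutions u 2 \<longleftrightarrow>
    val_ge 1 ((fst x - snd x - u) + a) \<and> (val_ge 1 (snd x + b) \<or> val_ge 1 ((v * snd x - u) + v * b))"
proof -
  have y: "(fst x + (a + b), snd x + b) \<in> O2"
    using x a b unfolding mem_O2_iff by (simp add: val_ge_add)
  have e: "fst x + (a + b) - (snd x + b) - u = (fst x - snd x - u) + a"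
    "v * (snd x + b) - u = (v * snd x - u) + v * b"
    by (simp_all add: algebra_simps)
  have "(fst x + (a + b), snd x + b) \<in> solutions u 2 \<longleftrightarrow>
      val_ge 2 (norm_form (fst x + (a + b), snd x + b) - u\<^sup>2)"
    using y unfolding solutions_def by simp
  also have "\<dots> \<longleftrightarrow> val_ge 1 (fst x + (a + b) - (snd x + b) - u) \<and>
      (val_ge 1 (snd x + b) \<or> val_ge 1 (v * (snd x + b) - u))"
    using solutions_2_iff[OF y u] unfolding fst_conv snd_conv .
  finally show ?thesis
    by (simp only: e)
qed

lemma measure_solutions_2:
  assumes u: "absv u = 1"
  shows "measure \<mu> (scale j (solutions u 2)) = 2 * (1 / real q) ^ (2 * j + 2)"
proof -
  have u_int: "val_ge 0 u"
    using u unit_iff by blast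
  define g where "g p = (fst p + snd p, snd p)" for p :: "'a \<times> 'a"
  have g: "g p \<in> O2" if "p \<in> residues \<times> residues" for p
    using that residues_int unfolding g_def mem_O2_iff by (auto intro: val_ge_add)
  have count: "card {p \<in> residues \<times> residues. shift 0 x (g p) \<in> solutions u 2} = 1 * 2"
    if x: "x \<in> O2" for x
  proof -
    define P where "P a \<longleftrightarrow> val_ge 1 ((fst x - snd x - u) + a)" for a
    define Q where "Q b \<longleftrightarrow> val_ge 1 (snd x + b) \<or> val_ge 1 ((v * snd x - u) + v * b)" for b
    have "{p \<in> residues \<times> residues. shift 0 x (g p) \<in> solutions u 2} =
        {p \<in> residues \<times> residues. P (fst p) \<and> Q (snd p)}"
      using translate_mem_solutions_2_iff[OF x u] residues_int unfolding shift_def g_def P_def Q_def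
      by auto
    moreover have "card {a \<in> residues. P a} = 1" "card {b \<in> residues. Q b} = 2"
      unfolding P_def Q_def using x u_int card_residues_add_solutions card_residues_two_branches[OF u]
      unfolding mem_O2_iff by (simp_all add: val_ge_diff)
    ultimately show ?thesis
      using card_product_filter[of residues residues P Q] by simp
  qed
  have "periodic 1 (solutions u 2)"
    using periodic_solutions[OF _ _ u_int] by simp
  then have "measure \<mu> (scale j (solutions u 2)) = real (1 * 2) / real q ^ 2 * measure \<mu> (scale j O2)"
    using measure_scale_count_residues[OF periodic_O2 _ solutions_subset_O2 g count] by blast
  then show ?thesis
    using q_ge_2 by (simp add: measure_scale_O2 power2_eq_square)
qed

lemma norm_form_translate:
  "norm_form (x1 + 2 * Q * (a + b), x2 + 2 * Q * b) = norm_form (x1, x2) +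
     4 * Q * (x1 * a + Q * a\<^sup>2 + (x1 - (1 + 2 * v) * x2) * b + 2 * Q * (a * b - v * b\<^sup>2))"
  unfolding norm_form_def by (simp add: algebra_simps power2_eq_square)

text \<open>The coefficient \<open>x\<^sub>1 - \<Delta> x\<^sub>2\<close> is half the derivative of \<open>B\<close> along \<open>(1, 1)\<close>; it is
  congruent to \<open>x\<^sub>1 - x\<^sub>2 \<equiv> u\<close> modulo \<open>2\<close>.\<close>
lemma lift_coefficient_unit:
  assumes x: "x \<in> solutions u 1" and u: "absv u = 1"
  shows "absv (fst x - (1 + 2 * v) * snd x) = 1"
proof -
  have x_O2: "x \<in> O2" and "val_ge 1 (norm_form x - u\<^sup>2)"
    using x unfolding solutions_def by auto
  then have diff: "val_ge 1 (fst x - snd x - u)"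
    using solutions_1_iff[OF x_O2] u unit_iff by blast
  have int: "val_ge 0 (fst x)" "val_ge 0 (snd x)"
    using x_O2 unfolding mem_O2_iff by auto
  have even: "val_ge 1 (2 * (v * snd x))"
    using val_ge_0_mult[OF val_ge_0_v int(2)] by (rule val_ge_1_2_mult)
  have "\<not> val_ge 1 (fst x - (1 + 2 * v) * snd x)"
  proof
    assume "val_ge 1 (fst x - (1 + 2 * v) * snd x)"
    from val_ge_diff[OF val_ge_add[OF this even] diff]
    have "val_ge 1 (((fst x - (1 + 2 * v) * snd x) + 2 * (v * snd x)) - (fst x - snd x - u))" .
    then have "val_ge 1 u"
      by (simp add: algebra_simps)
    then show False
      using u unit_iff by blast
  qed
  moreover have "val_ge 0 (fst x - (1 + 2 * v) * snd x)"
    using int val_ge_0_v val_ge_0_2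
    by (intro val_ge_diff val_ge_0_mult val_ge_add) (auto simp: val_ge_def)
  ultimately show ?thesis
    using unit_iff by blast
qed

lemma hensel_lift_linear:
  assumes x: "x \<in> solutions u (k + 2)" and u: "absv u = 1" and a: "val_ge 0 a"
  obtains \<gamma> w where "val_ge 0 \<gamma>" "absv w = 1"
    "\<And>b. val_ge 0 b \<Longrightarrow>
      val_ge (k + 3) (norm_form (shift (k + 1) x (a + b, b)) - u\<^sup>2) \<longleftrightarrow> val_ge 1 (\<gamma> + w * b)"
proof -
  obtain x1 x2 where x_eq: "x = (x1, x2)"
    by (cases x)
  have int: "val_ge 0 x1" "val_ge 0 x2"
    using x unfolding x_eq solutions_def mem_O2_iff by auto
  define Q :: 'a where "Q = 2 ^ k"
  have Q: "val_ge 0 Q"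
    unfolding Q_def by (rule val_ge_0_pow2)
  have pow2: "(2::'a) ^ (k + 1) = 2 * Q" "(2::'a) ^ (k + 2) = 4 * Q"
    unfolding Q_def by (simp_all add: power_add mult_ac)
  have "val_ge (k + 2) (norm_form x - u\<^sup>2)"
    using x unfolding solutions_def by simp
  then obtain \<alpha> where \<alpha>: "val_ge 0 \<alpha>" "norm_form x - u\<^sup>2 = 4 * Q * \<alpha>"
    using val_ge_imp_pow2_mult[of "k + 2"] unfolding pow2 by blast
  define \<gamma> where "\<gamma> = \<alpha> + x1 * a + Q * a\<^sup>2"
  define w where "w = x1 - (1 + 2 * v) * x2"
  have \<gamma>: "val_ge 0 \<gamma>"
    unfolding \<gamma>_def using \<alpha>(1) int a Q by (intro val_ge_add val_ge_0_mult val_ge_0_power)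
  have w: "absv w = 1"
    using lift_coefficient_unit[OF _ u] x solutions_antimono[of 1 "k + 2"]
    unfolding w_def x_eq by fastforce
  have "val_ge (k + 3) (norm_form (shift (k + 1) x (a + b, b)) - u\<^sup>2) \<longleftrightarrow> val_ge 1 (\<gamma> + w * b)"
    if b: "val_ge 0 b" for b
  proof -
    have "norm_form (shift (k + 1) x (a + b, b)) - u\<^sup>2 =
        (norm_form x - u\<^sup>2) + 4 * Q * (x1 * a + Q * a\<^sup>2 + w * b + 2 * Q * (a * b - v * b\<^sup>2))"
      unfolding x_eq shift_def pow2 fst_conv snd_conv norm_form_translate w_def
      by (simp add: algebra_simps)
    also have "\<dots> = 2 ^ (k + 2) * ((\<gamma> + w * b) + 2 * (Q * (a * b - v * b\<^sup>2)))"
      unfolding \<alpha>(2) \<gamma>_def pow2 by (simp add: algebra_simps)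
    finally have "val_ge (k + 3) (norm_form (shift (k + 1) x (a + b, b)) - u\<^sup>2) \<longleftrightarrow>
        val_ge 1 ((\<gamma> + w * b) + 2 * (Q * (a * b - v * b\<^sup>2)))"
      using val_ge_pow2_mult_iff[of "k + 2" 1] by (simp add: numeral_3_eq_3)
    moreover have "val_ge 1 (2 * (Q * (a * b - v * b\<^sup>2)))"
      using Q a b val_ge_0_v by (intro val_ge_1_2_mult val_ge_0_mult val_ge_diff val_ge_0_power)
    ultimately show ?thesis
      using val_ge_add val_ge_diff by fastforce
  qed
  with \<gamma> w show ?thesis
    by (rule that)
qed

lemma card_hensel_lifts:
  assumes x: "x \<in> solutions u (k + 2)" and u: "absv u = 1" and a: "a \<in> residues"
  shows "card {b \<in> residues. shift (k + 1) x (a + b, b) \<in> solutions u (k + 3)} = 1"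
proof -
  obtain \<gamma> w where \<gamma>: "val_ge 0 \<gamma>" and w: "absv w = 1" and lift: "\<And>b. val_ge 0 b \<Longrightarrow>
      val_ge (k + 3) (norm_form (shift (k + 1) x (a + b, b)) - u\<^sup>2) \<longleftrightarrow> val_ge 1 (\<gamma> + w * b)"
    using hensel_lift_linear[OF x u residues_int[OF a]] by blast
  have "shift (k + 1) x (a + b, b) \<in> solutions u (k + 3) \<longleftrightarrow> val_ge 1 (\<gamma> + w * b)"
    if b: "b \<in> residues" for b
  proof -
    have "(a + b, b) \<in> O2"
      using residues_int a b unfolding mem_O2_iff by (simp add: val_ge_add)
    then have "shift (k + 1) x (a + b, b) \<in> O2"
      using x solutions_subset_O2 shift_mem_O2 by blast
    then show ?thesis
      using lift[OF residues_int[OF b]] unfolding solutions_def by simp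
  qed
  then have "{b \<in> residues. shift (k + 1) x (a + b, b) \<in> solutions u (k + 3)} =
      {b \<in> residues. val_ge 1 (\<gamma> + w * b)}"
    by blast
  then show ?thesis
    using card_residues_linear_solutions[OF w \<gamma>] by simp
qed

lemma measure_solutions_Suc:
  assumes u: "absv u = 1"
  shows "measure \<mu> (scale j (solutions u (k + 3))) = measure \<mu> (scale j (solutions u (k + 2))) / real q"
proof -
  have u_int: "val_ge 0 u"
    using u unit_iff by blast
  have A: "periodic (k + 1) (solutions u (k + 2))"
    using periodic_solutions[OF _ _ u_int] by simp
  have C: "periodic (k + 3) (solutions u (k + 3))"
    using periodic_solutions[OF _ _ u_int] by simp
  have sub: "solutions u (k + 3) \<subseteq> solutions u (k + 2)"
    by (rule solutions_antimono) simp
  define g where "g p = (fst p + snd p, snd p)" for p :: "'a \<times> 'a"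
  have g: "g p \<in> O2" if "p \<in> residues \<times> residues" for p
    using that residues_int unfolding g_def mem_O2_iff by (auto intro: val_ge_add)
  have count: "card {p \<in> residues \<times> residues. shift (k + 1) x (g p) \<in> solutions u (k + 3)} = q"
    if x: "x \<in> solutions u (k + 2)" for x
  proof -
    have "card {b \<in> residues. shift (k + 1) x (g (a, b)) \<in> solutions u (k + 3)} = 1"
      if "a \<in> residues" for a
      using card_hensel_lifts[OF x u that] unfolding g_def by simp
    then show ?thesis
      using card_product_filter_unique_snd[OF finite_residues,
          of residues "\<lambda>a b. shift (k + 1) x (g (a, b)) \<in> solutions u (k + 3)"]
      by (simp add: card_residues)
  qed
  have "measure \<mu> (scale j (solutions u (k + 3))) = real q / real q ^ 2 * measure \<mu> (scale j (solutions u (k + 2)))"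
    using measure_scale_count_residues[OF A C sub g count] by blast
  then show ?thesis
    by (simp add: power2_eq_square)
qed

lemma measure_solutions_unit:
  assumes u: "absv u = 1"
  shows "measure \<mu> (scale j (solutions u (k + 2))) = 2 * (1 / real q) ^ (2 * j + (k + 2))"
proof (induction k)
  case 0
  show ?case
    using measure_solutions_2[OF u, of j] by (simp add: numeral_2_eq_2)
next
  case (Suc k)
  have "measure \<mu> (scale j (solutions u (Suc k + 2))) = measure \<mu> (scale j (solutions u (k + 2))) / real q"
    using measure_solutions_Suc[OF u, of j k] by (simp add: numeral_3_eq_3)
  then show ?case
    using Suc.IH by simp
qed

lemma measure_solutions_le_1:
  assumes "val_ge 0 \<sigma>" "r \<le> 1"
  shows "measure \<mu> (scale j (solutions \<sigma> r)) = (1 / real q) ^ (2 * j + r)"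
proof (cases r)
  case 0
  then show ?thesis
    using solutions_0[OF assms(1)] measure_scale_O2 by simp
next
  case (Suc r')
  then show ?thesis
    using assms measure_solutions_1 by simp
qed

lemma measure_solutions_unit_le:
  assumes u: "absv u = 1" and n: "n \<le> 2 * T + 1"
  shows "measure \<mu> (solutions (2 ^ T * u) n) = (1 / real q) ^ n"
proof -
  define j where "j = n div 2"
  have n_eq: "n = n mod 2 + 2 * j"
    unfolding j_def by simp
  have \<sigma>: "val_ge 0 (2 ^ (T - j) * u)"
    using u unit_iff val_ge_0_mult val_ge_0_pow2 by blast
  have tu: "(2::'a) ^ T * u = 2 ^ j * (2 ^ (T - j) * u)"
    using n unfolding j_def by (simp add: mult.assoc[symmetric] power_add[symmetric])
  have "solutions (2 ^ T * u) n = scale j (solutions (2 ^ (T - j) * u) (n mod 2))"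
    unfolding tu using solutions_scale[OF \<sigma>, of j "n mod 2"] n_eq[symmetric] by simp
  then show ?thesis
    using measure_solutions_le_1[OF \<sigma>, of "n mod 2" j] n_eq by (simp add: add.commute)
qed

lemma measure_solutions_unit_gt:
  assumes u: "absv u = 1" and n: "2 * T + 1 < n"
  shows "measure \<mu> (solutions (2 ^ T * u) n) = 2 * (1 / real q) ^ n"
proof -
  define k where "k = n - 2 * T - 2"
  have n_eq: "n = (k + 2) + 2 * T"
    using n unfolding k_def by simp
  then have "solutions (2 ^ T * u) n = scale T (solutions u (k + 2))"
    using u unit_iff solutions_scale by blast
  moreover have "2 * T + (k + 2) = n"
    using n_eq by simp
  ultimately show ?thesis
    using measure_solutions_unit[OF u, of T k] by simp
qed

lemma measure_solutions:
  assumes t: "absv t = (1 / real q) ^ T"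
  shows "measure \<mu> (solutions t n) = (1 / real q) ^ n * (if n \<le> 2 * T + 1 then 1 else 2)"
proof -
  define u where "u = t / 2 ^ T"
  have u: "absv u = 1"
    unfolding u_def absv_divide absv_2_power t using q_ge_2 by simp
  have "t = 2 ^ T * u"
    unfolding u_def by simp
  then show ?thesis
    using measure_solutions_unit_le[OF u] measure_solutions_unit_gt[OF u] by simp
qed

end

section \<open>The generating series\<close>

lemma sums_geometric_doubled_tail:
  fixes w z :: complex and c :: real and X :: "nat \<Rightarrow> real"
  assumes w: "norm w < 1" and wz: "w = z * of_real c"
    and X: "\<And>l. X l = c ^ (l + 1) * (if l \<le> N then 1 else 2)"
  shows "(\<lambda>l. z ^ l * of_real (X l)) sums (of_real c * (1 + w ^ (N + 1)) / (1 - w))"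
proof -
  define tail where "tail l = (if N + 1 \<le> l then w ^ l else 0)" for l
  have geom: "(\<lambda>l. w ^ l) sums (1 / (1 - w))"
    using geometric_sums[OF w] by simp
  have "(\<lambda>l. tail (l + (N + 1))) sums (w ^ (N + 1) * (1 / (1 - w)))"
    unfolding tail_def using sums_mult[OF geom, of "w ^ (N + 1)"] by (simp add: power_add mult_ac)
  then have "tail sums (w ^ (N + 1) * (1 / (1 - w)))"
    using sums_iff_shift[of tail "N + 1"] unfolding tail_def by simp
  then have "(\<lambda>l. of_real c * (w ^ l + tail l)) sums (of_real c * (1 / (1 - w) + w ^ (N + 1) * (1 / (1 - w))))"
    using sums_mult[OF sums_add[OF geom]] by blast
  moreover have w_ne_1: "1 - w \<noteq> 0"
    using w by auto
  moreover have "(\<lambda>l. z ^ l * of_real (X l)) = (\<lambda>l. of_real c * (w ^ l + tail l))"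
    unfolding X wz tail_def by (auto simp: power_mult_distrib algebra_simps)
  moreover have "of_real c * (1 / (1 - w) + w ^ (N + 1) * (1 / (1 - w))) = of_real c * (1 + w ^ (N + 1)) / (1 - w)"
    using w_ne_1 by (simp add: field_simps)
  ultimately show ?thesis
    by simp
qed

theorem proposition6p6:
  fixes absv :: "'a::field \<Rightarrow> real" and q :: nat and \<mu> :: "('a \<times> 'a) measure"
    and v \<Delta> t :: 'a and T :: nat and \<beta> :: complex
  assumes k: "unram_dyadic_local_field absv q"
    and haar: "haar_prob_o2 absv \<mu>"
    and v_unit: "absv v = 1"
    and Delta: "\<Delta> = 1 + 2 * v"
    and Delta_unit: "absv \<Delta> = 1"
    and Delta_defect: "quad_defect absv \<Delta> = ideal_gen absv 2"
    and t_int: "t \<in> int_ring absv" and t_nz: "t \<noteq> 0"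
    and t_abs: "absv t = (1 / real q) ^ T"
    and beta: "Re \<beta> > 0"
  shows "(\<lambda>l. (of_real (real q) powr (- \<beta>)) ^ l *
              complex_of_real (X_l absv \<mu> (\<lambda>x. fst x ^ 2 - \<Delta> * snd x ^ 2) (t ^ 2) l))
         sums (complex_of_real (absv 2) *
               (1 + (of_real (real q) powr (- \<beta>) / of_real (real q)) ^ (2 * T + 1)) /
               (1 - of_real (real q) powr (- \<beta>) / of_real (real q)))"
proof -
  interpret dyadic_norm_form absv q \<mu> v
    using k haar v_unit by unfold_locales
  have X: "X_l absv \<mu> (\<lambda>x. fst x ^ 2 - \<Delta> * snd x ^ 2) (t ^ 2) l =
      (1 / real q) ^ (l + 1) * (if l \<le> 2 * T then 1 else 2)" for l
  proof -
    have "X_l absv \<mu> (\<lambda>x. fst x ^ 2 - \<Delta> * snd x ^ 2) (t ^ 2) l = measure \<mu> (solutions t (l + 1))"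
      unfolding X_l_def solutions_def O2_def ideal_gen_pow2_iff norm_form_def Delta ..
    then show ?thesis
      using measure_solutions[OF t_abs, of "l + 1"] by simp
  qed
  define z :: complex where "z = of_real (real q) powr (- \<beta>)"
  have "norm z = real q powr (- Re \<beta>)"
    unfolding z_def by (subst norm_powr_real_powr) auto
  also have "\<dots> < 1"
    using q_ge_2 beta by (simp add: powr_less_one)
  finally have "norm (z / of_real (real q)) < 1"
    using q_ge_2 by (simp add: norm_divide divide_less_eq)
  moreover have "z / of_real (real q) = z * of_real (1 / real q)"
    by (simp add: divide_inverse)
  ultimately show ?thesis
    using sums_geometric_doubled_tail[OF _ _ X] unfolding z_def absv_2 by blast
qed

end
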